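(* Let $\gamma,h>0$, $z,\tilde z\in\mathbb{R}^{2d}$, $n\ge1$, write $\Delta z=\tilde z-z=(\Delta x,\Delta v)$, and let $y_k=(u_k,w_k)$, $k\in\{0,\dots,n\}$, be the optimized trajectory. Then for all $k\in\{0,\dots,n\}$, \[ |u_k|\le|\Delta x|+\frac{he^{-\gamma h/2}}{1-e^{-\gamma h}}(1-e^{-\gamma hn})|\Delta v|\le 2\left(1+\frac{hn}{2+\gamma hn}\right)|\Delta z|. \]
   Context: Let $A_h=\begin{pmatrix} I_d & he^{-\gamma h/2}I_d\\ 0 & e^{-\gamma h}I_d\end{pmatrix}$, $L_h=(1-e^{-\gamma h})^{1/2}\begin{pmatrix} hI_d & 0\\ e^{-\gamma h/2}I_d & I_d\end{pmatrix}$, $\Sigma_{h,n}=\sum_{k=1}^n A_h^{n-k}L_hL_h^T(A_h^T)^{n-k}$, $\Delta z=\tilde z-z$, and $E_k=L_h^T(A_h^T)^{n-k}\Sigma_{h,n}^{-1}A_h^n\Delta z$ for $k=1,\dots,n$. The optimized trajectory is $y_0=\Delta z$, $y_{k+1}=A_hy_k-L_hE_{k+1}$ for $k=0,\dots,n-1$, with $y_k=(u_k,w_k)\in\mathbb{R}^d\times\mathbb{R}^d$ (position and velocity components). *)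

theory Defs
  imports "HOL-Analysis.Analysis"
begin

text \<open>Vectors of R^{2d} are indexed by the sum type 'd + 'd: indices Inl i are the
 position coordinates, Inr i the velocity coordinates (i ranges over the d-element type 'd).\<close>

type_synonym 'd phase = "real ^ ('d + 'd)"
type_synonym 'd phmat = "real ^ ('d + 'd) ^ ('d + 'd)"

definition blockmat :: "real \<Rightarrow> real \<Rightarrow> real \<Rightarrow> real \<Rightarrow> ('d::finite) phmat" where
  "blockmat a b c e = (\<chi> i j. (case (i, j) of
      (Inl p, Inl q) \<Rightarrow> (if p = q then a else 0)
    | (Inl p, Inr q) \<Rightarrow> (if p = q then b else 0)
    | (Inr p, Inl q) \<Rightarrow> (if p = q then c else 0)
    | (Inr p, Inr q) \<Rightarrow> (if p = q then e else 0)))"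

primrec matpow :: "('a::semiring_1) ^ 'n ^ 'n \<Rightarrow> nat \<Rightarrow> 'a ^ 'n ^ 'n" where
  "matpow M 0 = mat 1"
| "matpow M (Suc k) = M ** matpow M k"

definition Ah :: "real \<Rightarrow> real \<Rightarrow> ('d::finite) phmat" where
  "Ah \<gamma> h = blockmat 1 (h * exp (-\<gamma>*h/2)) 0 (exp (-\<gamma>*h))"

definition Lh :: "real \<Rightarrow> real \<Rightarrow> ('d::finite) phmat" where
  "Lh \<gamma> h = sqrt (1 - exp (-\<gamma>*h)) *\<^sub>R blockmat h 0 (exp (-\<gamma>*h/2)) 1"

definition Sigma_hn :: "real \<Rightarrow> real \<Rightarrow> nat \<Rightarrow> ('d::finite) phmat" where
  "Sigma_hn \<gamma> h n = (\<Sum>k=1..n. matpow (Ah \<gamma> h) (n-k) ** Lh \<gamma> h ** transpose (Lh \<gamma> h)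
                                   ** matpow (transpose (Ah \<gamma> h)) (n-k))"

definition Ek :: "real \<Rightarrow> real \<Rightarrow> nat \<Rightarrow> ('d::finite) phase \<Rightarrow> nat \<Rightarrow> 'd phase" where
  "Ek \<gamma> h n dz k = (transpose (Lh \<gamma> h) ** matpow (transpose (Ah \<gamma> h)) (n-k)
                      ** matrix_inv (Sigma_hn \<gamma> h n) ** matpow (Ah \<gamma> h) n) *v dz"

primrec traj :: "real \<Rightarrow> real \<Rightarrow> nat \<Rightarrow> ('d::finite) phase \<Rightarrow> nat \<Rightarrow> 'd phase" where
  "traj \<gamma> h n dz 0 = dz"
| "traj \<gamma> h n dz (Suc k) = Ah \<gamma> h *v traj \<gamma> h n dz k - Lh \<gamma> h *v Ek \<gamma> h n dz (Suc k)"

definition pos :: "('d::finite) phase \<Rightarrow> real ^ 'd" where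
  "pos y = (\<chi> i. y $ Inl i)"

definition vel :: "('d::finite) phase \<Rightarrow> real ^ 'd" where
  "vel y = (\<chi> i. y $ Inr i)"

end

theory Submission
  imports Defs
begin

text \<open>All matrices involved are 2x2 block matrices whose blocks are scalar multiples of \<open>I\<^sub>d\<close>, so
  everything reduces to scalar recursions. Put \<open>t = e\<^sup>-\<^sup>\<gamma>\<^sup>h\<^sup>/\<^sup>2\<close> and \<open>r = t\<^sup>2\<close>. The trajectory is
  \<open>y\<^sub>k = Z\<^sub>k \<Delta>z\<close> with \<open>Z\<^sub>0 = I\<close> and \<open>Z\<^sub>k\<^sub>+\<^sub>1 = A\<^sub>h Z\<^sub>k - L\<^sub>h L\<^sub>h\<^sup>T (A\<^sub>h\<^sup>T)\<^sup>n\<^sup>-\<^sup>k\<^sup>-\<^sup>1 \<Lambda>\<close>, where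
  \<open>\<Lambda> = \<Sigma>\<^sub>h\<^sub>,\<^sub>n\<^sup>-\<^sup>1 A\<^sub>h\<^sup>n\<close>; unrolling the recursion gives \<open>Z\<^sub>n = A\<^sub>h\<^sup>n - \<Sigma>\<^sub>h\<^sub>,\<^sub>n \<Lambda>\<close>. Instead of
  inverting \<open>\<Sigma>\<^sub>h\<^sub>,\<^sub>n\<close> we guess \<open>\<Lambda>\<close>: for suitable \<open>\<Lambda>\<close> the velocity row of \<open>Z\<^sub>k\<close> is a combination
  of \<open>r\<^sup>k\<close>, \<open>r\<^sup>n\<^sup>-\<^sup>k\<close> and a constant, and the free parameters can be chosen so that \<open>Z\<^sub>n = 0\<close>,
  which forces \<open>\<Sigma>\<^sub>h\<^sub>,\<^sub>n \<Lambda> = A\<^sub>h\<^sup>n\<close>. The position row \<open>(a\<^sub>k, b\<^sub>k)\<close> of \<open>Z\<^sub>k\<close> is then explicit: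
  \<open>a\<^sub>k\<close> decreases from 1 to 0, and \<open>b\<^sub>k\<close> is a partial sum of increments that are at most
  \<open>h t r\<^sup>i\<close> and add up to 0, so \<open>|b\<^sub>k| \<le> h t (1 - r\<^sup>n) / (1 - r)\<close>. The second inequality
  follows from \<open>a e\<^sup>-\<^sup>a\<^sup>/\<^sup>2 \<le> 1 - e\<^sup>-\<^sup>a\<close> and \<open>(1 - e\<^sup>-\<^sup>T) (2 + T) \<le> 2 T\<close>.\<close>

section \<open>Block matrices\<close>

lemma sum_UNIV_Plus:
  "(\<Sum>x\<in>(UNIV :: ('a::finite + 'b::finite) set). f x) = (\<Sum>i\<in>UNIV. f (Inl i)) + (\<Sum>j\<in>UNIV. f (Inr j))"
  by (simp add: UNIV_Plus_UNIV [symmetric] sum.Plus del: UNIV_Plus_UNIV)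

lemma sum_delta_mult_delta:
  fixes i j :: "'a::finite" and x y :: real
  shows "(\<Sum>k\<in>UNIV. (if i = k then x else 0) * (if k = j then y else 0)) = (if i = j then x * y else 0)"
proof -
  have "(\<Sum>k\<in>UNIV. (if i = k then x else 0) * (if k = j then y else 0))
      = (\<Sum>k\<in>UNIV. if k = i then (if i = j then x * y else 0) else 0)"
    by (rule sum.cong) auto
  then show ?thesis by (subst (asm) sum.delta) simp_all
qed

lemma blockmat_nth [simp]:
  "blockmat a b c e $ Inl p $ Inl q = (if p = q then a else 0)"
  "blockmat a b c e $ Inl p $ Inr q = (if p = q then b else 0)"
  "blockmat a b c e $ Inr p $ Inl q = (if p = q then c else 0)"
  "blockmat a b c e $ Inr p $ Inr q = (if p = q then e else 0)"
  by (simp_all add: blockmat_def)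

lemma phmat_eqI:
  fixes M N :: "('d::finite) phmat"
  assumes "\<And>p q. M $ Inl p $ Inl q = N $ Inl p $ Inl q" and "\<And>p q. M $ Inl p $ Inr q = N $ Inl p $ Inr q"
    and "\<And>p q. M $ Inr p $ Inl q = N $ Inr p $ Inl q" and "\<And>p q. M $ Inr p $ Inr q = N $ Inr p $ Inr q"
  shows "M = N"
  unfolding vec_eq_iff by (metis assms sum.exhaust)

lemma blockmat_mult:
  "(blockmat a b c e :: ('d::finite) phmat) ** blockmat a' b' c' e' =
     blockmat (a*a' + b*c') (a*b' + b*e') (c*a' + e*c') (c*b' + e*e')"
  by (rule phmat_eqI; simp only: matrix_matrix_mult_def vec_lambda_beta sum_UNIV_Plus blockmat_nth
      sum_delta_mult_delta) auto

lemma transpose_blockmat: "transpose (blockmat a b c e :: ('d::finite) phmat) = blockmat a c b e"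
  by (rule phmat_eqI) (auto simp: transpose_def)

lemma mat_1_eq_blockmat: "(mat 1 :: ('d::finite) phmat) = blockmat 1 0 0 1"
  by (rule phmat_eqI) (auto simp: mat_def)

lemma blockmat_zero: "blockmat 0 0 0 0 = (0 :: ('d::finite) phmat)"
  by (rule phmat_eqI) auto

lemma blockmat_diff:
  "blockmat a b c e - blockmat a' b' c' e' = (blockmat (a-a') (b-b') (c-c') (e-e') :: ('d::finite) phmat)"
  by (rule phmat_eqI) auto

lemma scaleR_blockmat: "x *\<^sub>R blockmat a b c e = (blockmat (x*a) (x*b) (x*c) (x*e) :: ('d::finite) phmat)"
  by (rule phmat_eqI) auto

lemma pos_blockmat_mult_vec:
  "pos ((blockmat a b c e :: ('d::finite) phmat) *v y) = a *\<^sub>R pos y + b *\<^sub>R vel y"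
  unfolding vec_eq_iff pos_def vel_def matrix_vector_mult_def
  by (auto simp: sum_UNIV_Plus if_distrib[of "\<lambda>u. u * _"] cong: if_cong)

lemma matpow_blockmat_lower_triangular:
  "matpow (blockmat 1 0 b e :: ('d::finite) phmat) m = blockmat 1 0 (b * (\<Sum>j<m. e^j)) (e^m)"
proof (induction m)
  case 0
  show ?case by (simp add: mat_1_eq_blockmat)
next
  case (Suc m)
  have "(\<Sum>j<Suc m. e^j) = 1 + e * (\<Sum>j<m. e^j)"
    by (simp add: sum.lessThan_Suc_shift sum_distrib_left del: sum.lessThan_Suc)
  with Suc show ?case by (simp add: blockmat_mult algebra_simps del: sum.lessThan_Suc)
qed

lemma norm_pos_vel_sq: "norm (pos y)^2 + norm (vel y)^2 = norm (y :: ('d::finite) phase)^2"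
  by (simp add: power2_norm_eq_inner inner_vec_def pos_def vel_def sum_UNIV_Plus)

lemma norm_pos_le: "norm (pos y) \<le> norm (y :: ('d::finite) phase)"
proof (rule power2_le_imp_le)
  show "norm (pos y)^2 \<le> norm y^2"
    using norm_pos_vel_sq[of y] zero_le_power2[of "norm (vel y)"] by linarith
qed simp

lemma norm_vel_le: "norm (vel y) \<le> norm (y :: ('d::finite) phase)"
proof (rule power2_le_imp_le)
  show "norm (vel y)^2 \<le> norm y^2"
    using norm_pos_vel_sq[of y] zero_le_power2[of "norm (pos y)"] by linarith
qed simp

lemma matrix_diff_ldistrib: "(A :: 'a::ring_1^'n^'m) ** (B - C) = A ** B - A ** (C :: 'a^'p^'n)"
  unfolding vec_eq_iff matrix_matrix_mult_def by (simp add: algebra_simps sum_subtractf)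

lemma matrix_add_rdistrib: "((B :: 'a::semiring_1^'n^'m) + C) ** (A :: 'a^'p^'n) = B ** A + C ** A"
  unfolding vec_eq_iff matrix_matrix_mult_def by (simp add: algebra_simps sum.distrib)

lemma matrix_sum_ldistrib:
  "finite S \<Longrightarrow> (A :: 'a::semiring_1^'n^'m) ** (\<Sum>x\<in>S. f x) = (\<Sum>x\<in>S. A ** (f x :: 'a^'p^'n))"
  by (induction S rule: finite_induct) (simp_all add: matrix_add_ldistrib)

lemma matrix_inv_left:
  assumes "invertible (A :: 'a::semiring_1^'n^'n)"
  shows "matrix_inv A ** A = mat 1"
  using assms unfolding invertible_def matrix_inv_def by (rule someI2_ex) auto

lemma invertible_matpow:
  assumes "invertible (A :: 'a::semiring_1^'n^'n)"
  shows "invertible (matpow A m)"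
proof (induction m)
  case 0
  show ?case by (auto simp: invertible_def)
next
  case (Suc m)
  then show ?case by (simp add: invertible_mult assms)
qed

lemma matrix_inv_mult_eq:
  fixes S M B :: "'a::field^'n^'n"
  assumes SM: "S ** M = B" and "invertible B"
  shows "matrix_inv S ** B = M"
proof -
  obtain B' where "B ** B' = mat 1"
    using \<open>invertible B\<close> invertible_right_inverse by blast
  then have "S ** (M ** B') = mat 1"
    using SM by (simp add: matrix_mul_assoc)
  then have "invertible S"
    using invertible_right_inverse by blast
  then show ?thesis
    by (simp add: matrix_mul_assoc matrix_inv_left flip: SM)
qed

lemma feedback_recursion_closed_form:
  fixes A L M :: "'a::ring_1^'n^'n" and Z :: "nat \<Rightarrow> 'a^'n^'n"
  assumes "Z 0 = mat 1"
    and "\<And>j. j < k \<Longrightarrow> Z (Suc j) = A ** Z j - L ** transpose L ** matpow (transpose A) (n - Suc j) ** M"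
  shows "Z k = matpow A k - (\<Sum>j=1..k. matpow A (k-j) ** L ** transpose L ** matpow (transpose A) (n-j)) ** M"
  using assms(2)
proof (induction k)
  case 0
  show ?case using assms(1) by simp
next
  case (Suc k)
  define F where "F m j = matpow A (m - j) ** L ** transpose L ** matpow (transpose A) (n - j)" for m j
  have IH: "Z k = matpow A k - (\<Sum>j=1..k. F k j) ** M"
    using Suc by (simp add: F_def)
  have shift: "A ** (\<Sum>j=1..k. F k j) = (\<Sum>j=1..k. F (Suc k) j)"
    by (auto simp: F_def matrix_sum_ldistrib matrix_mul_assoc Suc_diff_le intro!: sum.cong)
  have "Z (Suc k) = A ** Z k - F (Suc k) (Suc k) ** M"
    using Suc.prems by (simp add: F_def)
  also have "\<dots> = matpow A (Suc k) - (A ** (\<Sum>j=1..k. F k j)) ** M - F (Suc k) (Suc k) ** M"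
    by (simp add: IH matrix_diff_ldistrib matrix_mul_assoc)
  also have "\<dots> = matpow A (Suc k) - (\<Sum>j=1..Suc k. F (Suc k) j) ** M"
    unfolding shift by (simp add: sum.cl_ivl_Suc matrix_add_rdistrib diff_diff_eq)
  finally show ?case
    by (simp add: F_def)
qed

section \<open>Exponential inequalities\<close>

lemma two_mult_le_exp_minus_exp_neg:
  assumes "0 \<le> (x::real)"
  shows "2 * x \<le> exp x - exp (-x)"
proof -
  let ?f = "\<lambda>x::real. exp x - exp (-x) - 2 * x"
  have "?f 0 \<le> ?f x"
  proof (rule DERIV_nonneg_imp_nondecreasing[OF assms])
    fix y :: real
    have "exp y + exp (-y) - 2 \<ge> 0"
      using exp_ge_add_one_self[of y] exp_ge_add_one_self[of "-y"] by linarith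
    moreover have "DERIV ?f y :> exp y + exp (-y) - 2"
      by (auto intro!: derivative_eq_intros)
    ultimately show "\<exists>d. DERIV ?f y :> d \<and> d \<ge> 0" by blast
  qed
  then show ?thesis by simp
qed

lemma one_minus_mult_exp_le:
  assumes "0 \<le> (x::real)"
  shows "(1 - x) * exp x \<le> (1 + x) * exp (-x)"
proof -
  let ?f = "\<lambda>x::real. (1 + x) * exp (-x) - (1 - x) * exp x"
  have "?f 0 \<le> ?f x"
  proof (rule DERIV_nonneg_imp_nondecreasing[OF assms])
    fix y :: real
    assume "0 \<le> y" "y \<le> x"
    then have "y * (exp y - exp (-y)) \<ge> 0" by simp
    moreover have "DERIV ?f y :> y * (exp y - exp (-y))"
      by (auto intro!: derivative_eq_intros simp: algebra_simps)
    ultimately show "\<exists>d. DERIV ?f y :> d \<and> d \<ge> 0" by blast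
  qed
  then show ?thesis by simp
qed

lemma mult_exp_neg_half_le:
  assumes "0 \<le> (a::real)"
  shows "a * exp (-a/2) \<le> 1 - exp (-a)"
proof -
  have "a * exp (-a/2) \<le> (exp (a/2) - exp (-(a/2))) * exp (-a/2)"
    using two_mult_le_exp_minus_exp_neg[of "a/2"] assms by (intro mult_right_mono) auto
  also have "\<dots> = 1 - exp (-a)"
    by (simp add: algebra_simps flip: exp_add)
  finally show ?thesis .
qed

lemma one_minus_exp_neg_mult_le:
  assumes "0 \<le> (T::real)"
  shows "(1 - exp (-T)) * (2 + T) \<le> 2 * T"
proof -
  have "(1 - T/2) * exp (T/2) * exp (-(T/2)) \<le> (1 + T/2) * exp (-(T/2)) * exp (-(T/2))"
    using one_minus_mult_exp_le[of "T/2"] assms by (intro mult_right_mono) auto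
  then have "1 - T/2 \<le> (1 + T/2) * exp (-T)"
    by (simp add: algebra_simps flip: exp_add)
  then show ?thesis by (simp add: algebra_simps)
qed

section \<open>The optimized trajectory in closed form\<close>

locale langevin_step =
  fixes \<gamma> h :: real and n :: nat
  assumes gamma_pos: "0 < \<gamma>" and h_pos: "0 < h" and n_pos: "1 \<le> n"
begin

definition t :: real where "t = exp (-\<gamma>*h/2)"

definition r :: real where "r = t^2"

lemma t_pos: "0 < t" and t_less_1: "t < 1"
  using gamma_pos h_pos by (auto simp: t_def)

lemma r_pos: "0 < r" and r_less_1: "r < 1"
  using t_pos t_less_1 by (simp_all add: r_def abs_square_less_1)

lemma t_mult_t: "t * t = r"
  by (simp add: r_def power2_eq_square)

lemma rn_pos: "0 < r^n" and rn_less_1: "r^n < 1"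
  using r_pos r_less_1 n_pos by (simp_all add: power_less_one_iff)

lemma rn_sq_less_1: "r^n * r^n < 1"
proof -
  have "r^n * r^n \<le> r^n" using rn_pos rn_less_1 by (simp add: mult_left_le)
  then show ?thesis using rn_less_1 by linarith
qed

lemma exp_neg_half: "exp (-(\<gamma>*h/2)) = t"
  by (simp add: t_def)

lemma exp_neg: "exp (-(\<gamma>*h)) = r"
proof -
  have "exp (-(\<gamma>*h)) = exp (-(\<gamma>*h/2)) * exp (-(\<gamma>*h/2))"
    by (simp flip: exp_add)
  then show ?thesis by (simp add: exp_neg_half t_mult_t)
qed

lemma exp_neg_n: "exp (-(\<gamma>*h*n)) = r^n"
proof -
  have "exp (-(\<gamma>*h*n)) = exp (real n * (-(\<gamma>*h)))" by (simp add: algebra_simps)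
  then show ?thesis by (simp only: exp_of_nat_mult exp_neg)
qed

lemma Ah_eq: "Ah \<gamma> h = blockmat 1 (h*t) 0 r"
  by (simp add: Ah_def exp_neg_half exp_neg)

lemma Lh_mult_transpose:
  "Lh \<gamma> h ** transpose (Lh \<gamma> h) =
     (blockmat ((1-r)*(h*h)) ((1-r)*(h*t)) ((1-r)*(h*t)) ((1-r)*(t*t+1)) :: ('d::finite) phmat)"
proof -
  define s where "s = sqrt (1 - r)"
  have s: "1 - r = s * s" and abs_s: "\<bar>s\<bar> = s"
    using r_less_1 by (simp_all add: s_def)
  show ?thesis
    by (simp add: Lh_def exp_neg_half exp_neg s_def [symmetric] scaleR_blockmat transpose_blockmat
        blockmat_mult s abs_s algebra_simps)
qed

lemma invertible_Ah: "invertible (Ah \<gamma> h :: ('d::finite) phmat)"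
proof -
  have "(Ah \<gamma> h :: 'd phmat) ** blockmat 1 (-h*t/r) 0 (1/r) = mat 1"
    using r_pos by (simp add: Ah_eq blockmat_mult mat_1_eq_blockmat)
  then show ?thesis using invertible_right_inverse by blast
qed

text \<open>Ansatz for a column \<open>(u\<^sub>k, w\<^sub>k) = (pos_coeff u H K P k, vel_coeff H K P k)\<close> of \<open>Z\<^sub>k\<close> under the
  column \<open>(gain_pos P, gain_vel K P)\<close> of \<open>\<Lambda>\<close>.\<close>

definition vel_coeff :: "real \<Rightarrow> real \<Rightarrow> real \<Rightarrow> nat \<Rightarrow> real" where
  "vel_coeff H K P k = H * r^k + K * r^(n-k) + 2*t*P"

definition pos_incr :: "real \<Rightarrow> real \<Rightarrow> real \<Rightarrow> nat \<Rightarrow> real" where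
  "pos_incr H K P i = t * (H * r^i + K * r^(n - Suc i)) + (1+r) * P"

definition pos_coeff :: "real \<Rightarrow> real \<Rightarrow> real \<Rightarrow> real \<Rightarrow> nat \<Rightarrow> real" where
  "pos_coeff u H K P k = u + h * (\<Sum>i<k. pos_incr H K P i)"

definition gain_pos :: "real \<Rightarrow> real" where
  "gain_pos P = - (1-r) * P / h"

definition gain_vel :: "real \<Rightarrow> real \<Rightarrow> real" where
  "gain_vel K P = - K - t*P"

lemma ansatz_step:
  fixes u H K P :: real
  assumes "k < n"
  defines "\<mu> \<equiv> h*t*(\<Sum>j<n - Suc k. r^j) * gain_pos P + r^(n - Suc k) * gain_vel K P"
  shows "pos_coeff u H K P (Suc k)
           = pos_coeff u H K P k + h*t * vel_coeff H K P k - (1-r) * (h * (h * gain_pos P) + h*t * \<mu>)"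
    and "vel_coeff H K P (Suc k) = r * vel_coeff H K P k - (1-r) * (t * (h * gain_pos P) + (t*t+1) * \<mu>)"
proof -
  define m where "m = n - Suc k"
  have gain: "h * gain_pos P = - (1-r) * P"
    using h_pos by (simp add: gain_pos_def)
  have geom: "(1-r) * (\<Sum>j<m. r^j) = 1 - r^m"
    using r_less_1 by (simp add: sum_gp_strict)
  have "\<mu> = t * ((1-r) * (\<Sum>j<m. r^j)) * (-P) + r^m * gain_vel K P"
    unfolding \<mu>_def m_def [symmetric] gain_pos_def using h_pos by (simp add: field_simps)
  then have mu: "\<mu> = - (t*P + K * r^m)"
    unfolding geom gain_vel_def by (simp add: algebra_simps)
  have incr: "pos_incr H K P k = t * (H * r^k + K * r^m) + (1+r) * P"
    by (simp add: pos_incr_def m_def)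
  have "n - k = Suc m"
    using assms by (simp add: m_def)
  then have vel: "vel_coeff H K P k = H * r^k + K * (r * r^m) + 2*t*P"
    by (simp add: vel_coeff_def)
  have vel_Suc: "vel_coeff H K P (Suc k) = H * (r * r^k) + K * r^m + 2*t*P"
    by (simp add: vel_coeff_def m_def)
  have "h * pos_incr H K P k = h*t * vel_coeff H K P k - (1-r) * (h * (h * gain_pos P) + h*t * \<mu>)"
    unfolding incr vel gain mu by (simp add: algebra_simps flip: t_mult_t)
  then show "pos_coeff u H K P (Suc k)
      = pos_coeff u H K P k + h*t * vel_coeff H K P k - (1-r) * (h * (h * gain_pos P) + h*t * \<mu>)"
    by (simp add: pos_coeff_def algebra_simps)
  show "vel_coeff H K P (Suc k) = r * vel_coeff H K P k - (1-r) * (t * (h * gain_pos P) + (t*t+1) * \<mu>)"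
    unfolding vel_Suc vel gain mu by (simp add: algebra_simps flip: t_mult_t)
qed

text \<open>The parameters \<open>(H0, K0, 0)\<close> give the
  velocity profile with \<open>w\<^sub>0 = 1\<close> and \<open>w\<^sub>n = 0\<close>. The direction \<open>(2t, 2t, -(1 + r\<^sup>n))\<close> has velocity
  vanishing at \<open>k = 0\<close> and \<open>k = n\<close> and position increments \<open>-rho i\<close>; the multiples \<open>kappa1\<close>,
  \<open>kappa2\<close> of it are chosen so that both final positions vanish, i.e. \<open>Z\<^sub>n = 0\<close>.\<close>

definition rho :: "nat \<Rightarrow> real" where
  "rho i = (1+r) * (1 + r^n) - 2 * (r * r^i + r * r^(n - Suc i))"

definition H0 :: real where "H0 = 1 / (1 - r^n * r^n)"
definition K0 :: real where "K0 = - (r^n) / (1 - r^n * r^n)"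

definition kappa1 :: real where "kappa1 = 1 / (h * (\<Sum>i<n. rho i))"
definition kappa2 :: real where "kappa2 = (\<Sum>i<n. pos_incr H0 K0 0 i) / (\<Sum>i<n. rho i)"

definition H1 :: real where "H1 = 2*t*kappa1"
definition P1 :: real where "P1 = - kappa1 * (1 + r^n)"
definition H2 :: real where "H2 = H0 + 2*t*kappa2"
definition K2 :: real where "K2 = K0 + 2*t*kappa2"
definition P2 :: real where "P2 = - kappa2 * (1 + r^n)"

definition Zmat :: "nat \<Rightarrow> ('d::finite) phmat" where
  "Zmat k = blockmat (pos_coeff 1 H1 H1 P1 k) (pos_coeff 0 H2 K2 P2 k)
                     (vel_coeff H1 H1 P1 k) (vel_coeff H2 K2 P2 k)"

definition Lambda :: "('d::finite) phmat" where
  "Lambda = blockmat (gain_pos P1) (gain_pos P2) (gain_vel H1 P1) (gain_vel K2 P2)"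

lemma rho_pos:
  assumes "i < n"
  shows "0 < rho i"
proof -
  define a where "a = r^i"
  define b where "b = r^(n - Suc i)"
  have rn: "r^n = r*a*b" using assms unfolding a_def b_def
    by (metis Suc_leI le_add_diff_inverse mult.assoc power_Suc power_add)
  have ab: "a \<le> 1" "b \<le> 1" "0 \<le> a" "0 \<le> b"
    using r_pos r_less_1 by (auto simp: a_def b_def power_le_one)
  have "rho i = (1 - r*a) * (1 - r*b) + (r - r*a) * (1 - b)"
    unfolding rho_def rn a_def [symmetric] b_def [symmetric] by (simp add: algebra_simps)
  moreover have "(1 - r*a) * (1 - r*b) > 0"
    using ab r_pos r_less_1
    by (intro mult_pos_pos) (auto simp: mult_le_one intro: mult_le_one le_less_trans[of _ r])
  moreover have "(r - r*a) * (1 - b) \<ge> 0"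
    using ab r_pos by (intro mult_nonneg_nonneg) (auto simp: mult_left_le)
  ultimately show ?thesis by linarith
qed

lemma sum_rho_pos: "0 < (\<Sum>i<n. rho i)"
  using n_pos by (intro sum_pos) (auto intro: rho_pos simp: lessThan_empty_iff)

lemma pos_incr_shift:
  "pos_incr (H + 2*t*\<kappa>) (K + 2*t*\<kappa>) (P - \<kappa> * (1 + r^n)) i = pos_incr H K P i - \<kappa> * rho i"
  unfolding pos_incr_def rho_def by (simp add: algebra_simps flip: t_mult_t)

lemma pos_incr_col1: "pos_incr H1 H1 P1 i = - kappa1 * rho i"
  using pos_incr_shift[of 0 kappa1 0 0 i] by (simp add: H1_def P1_def pos_incr_def)

lemma pos_incr_col2: "pos_incr H2 K2 P2 i = pos_incr H0 K0 0 i - kappa2 * rho i"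
  using pos_incr_shift[of H0 kappa2 K0 0 i] by (simp add: H2_def K2_def P2_def)

lemma pos_col1_eq: "pos_coeff 1 H1 H1 P1 k = 1 - (\<Sum>i<k. rho i) / (\<Sum>i<n. rho i)"
proof -
  have "(\<Sum>i<k. pos_incr H1 H1 P1 i) = - kappa1 * (\<Sum>i<k. rho i)"
    by (simp add: pos_incr_col1 sum_distrib_left)
  then show ?thesis
    using h_pos sum_rho_pos by (simp add: pos_coeff_def kappa1_def field_simps)
qed

lemma sum_pos_incr_col2: "(\<Sum>i<n. pos_incr H2 K2 P2 i) = 0"
proof -
  have "(\<Sum>i<n. pos_incr H2 K2 P2 i) = (\<Sum>i<n. pos_incr H0 K0 0 i) - kappa2 * (\<Sum>i<n. rho i)"
    by (simp add: pos_incr_col2 sum_subtractf sum_distrib_left)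
  then show ?thesis
    using sum_rho_pos by (simp add: kappa2_def)
qed

lemma H0_K0: "H0 + K0 * r^n = 1" "H0 * r^n + K0 = 0"
  using rn_sq_less_1 unfolding H0_def K0_def by (simp_all add: field_simps)

lemma Zmat_0: "Zmat 0 = mat 1"
  using H0_K0(1) by (simp add: Zmat_def mat_1_eq_blockmat pos_coeff_def vel_coeff_def
      H1_def P1_def H2_def K2_def P2_def algebra_simps)

lemma Zmat_n: "Zmat n = 0"
proof -
  have "pos_coeff 1 H1 H1 P1 n = 0"
    using sum_rho_pos by (simp add: pos_col1_eq)
  moreover have "pos_coeff 0 H2 K2 P2 n = 0"
    by (simp add: pos_coeff_def sum_pos_incr_col2)
  moreover have "vel_coeff H1 H1 P1 n = 0" "vel_coeff H2 K2 P2 n = 0"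
    using H0_K0(2) by (simp_all add: vel_coeff_def H1_def P1_def H2_def K2_def P2_def algebra_simps)
  ultimately show ?thesis by (simp add: Zmat_def blockmat_zero)
qed

lemma Zmat_Suc:
  assumes "k < n"
  shows "Zmat (Suc k) = Ah \<gamma> h ** Zmat k
           - Lh \<gamma> h ** transpose (Lh \<gamma> h) ** matpow (transpose (Ah \<gamma> h)) (n - Suc k) ** Lambda"
  unfolding Zmat_def Lambda_def Lh_mult_transpose Ah_eq transpose_blockmat
    matpow_blockmat_lower_triangular blockmat_mult blockmat_diff
  by (intro arg_cong4[where f = blockmat]) (simp_all add: ansatz_step[OF assms] algebra_simps)

lemma Sigma_mult_Lambda: "Sigma_hn \<gamma> h n ** Lambda = (matpow (Ah \<gamma> h) n :: ('d::finite) phmat)"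
proof -
  have "(Zmat n :: 'd phmat) = matpow (Ah \<gamma> h) n - Sigma_hn \<gamma> h n ** Lambda"
    unfolding Sigma_hn_def
    by (rule feedback_recursion_closed_form) (simp_all add: Zmat_0 Zmat_Suc)
  then show ?thesis by (simp add: Zmat_n)
qed

lemma traj_eq_Zmat:
  assumes "k \<le> n"
  shows "traj \<gamma> h n dz k = Zmat k *v (dz :: ('d::finite) phase)"
  using assms
proof (induction k)
  case 0
  show ?case by (simp add: Zmat_0)
next
  case (Suc k)
  have inv: "matrix_inv (Sigma_hn \<gamma> h n) ** matpow (Ah \<gamma> h) n = (Lambda :: 'd phmat)"
    by (rule matrix_inv_mult_eq[OF Sigma_mult_Lambda invertible_matpow[OF invertible_Ah]])
  have "Ek \<gamma> h n dz (Suc k) = (transpose (Lh \<gamma> h) ** matpow (transpose (Ah \<gamma> h)) (n - Suc k)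
      ** (matrix_inv (Sigma_hn \<gamma> h n) ** matpow (Ah \<gamma> h) n)) *v dz"
    by (simp add: Ek_def matrix_mul_assoc)
  then have "Ek \<gamma> h n dz (Suc k)
      = (transpose (Lh \<gamma> h) ** matpow (transpose (Ah \<gamma> h)) (n - Suc k) ** Lambda) *v dz"
    by (simp only: inv)
  with Suc show ?case
    by (simp add: Zmat_Suc matrix_vector_mul_assoc matrix_vector_mult_diff_rdistrib matrix_mul_assoc)
qed

section \<open>Bounds on the position coefficients\<close>

lemma pos_col1_bounds:
  assumes "k \<le> n"
  shows "0 \<le> pos_coeff 1 H1 H1 P1 k" and "pos_coeff 1 H1 H1 P1 k \<le> 1"
proof -
  have rho_nonneg: "\<And>i. i < n \<Longrightarrow> 0 \<le> rho i" using rho_pos by (simp add: less_imp_le)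
  have lower: "0 \<le> (\<Sum>i<k. rho i)" using rho_nonneg assms by (intro sum_nonneg) auto
  have upper: "(\<Sum>i<k. rho i) \<le> (\<Sum>i<n. rho i)" using rho_nonneg assms by (intro sum_mono2) auto
  show "0 \<le> pos_coeff 1 H1 H1 P1 k" "pos_coeff 1 H1 H1 P1 k \<le> 1"
    unfolding pos_col1_eq using lower upper sum_rho_pos by simp_all
qed

lemma pos_incr_H0_K0_bounds:
  assumes "i < n"
  shows "0 \<le> pos_incr H0 K0 0 i" and "pos_incr H0 K0 0 i \<le> t * r^i"
proof -
  define D where "D = 1 - r^n * r^n"
  have D: "0 < D" using rn_sq_less_1 by (simp add: D_def)
  have eq: "pos_incr H0 K0 0 i = t * (r^i - r^n * r^(n - Suc i)) / D"
  proof -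
    have "t * (1/D * r^i + (- (r^n))/D * r^(n - Suc i)) = t * (r^i - r^n * r^(n - Suc i)) / D"
      using D by (simp add: field_simps)
    then show ?thesis by (simp add: pos_incr_def H0_def K0_def D_def)
  qed
  have r01: "0 \<le> r" "r \<le> 1" using r_pos r_less_1 by auto
  have "r^n * r^(n - Suc i) = r^(n + (n - Suc i))" by (simp add: power_add)
  also have "\<dots> \<le> r^i" using assms r01 by (intro power_decreasing) auto
  finally have upper: "r^n * r^(n - Suc i) \<le> r^i" .
  have "r^i * (r^n * r^n) = r^(i + (n + n))" by (simp add: power_add)
  also have "\<dots> \<le> r^(n + (n - Suc i))" using assms r01 by (intro power_decreasing) auto
  also have "\<dots> = r^n * r^(n - Suc i)" by (simp add: power_add)
  finally have lower: "r^i * (r^n * r^n) \<le> r^n * r^(n - Suc i)" .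
  show "0 \<le> pos_incr H0 K0 0 i" unfolding eq using upper D t_pos by simp
  have "t * (r^i - r^n * r^(n - Suc i)) \<le> t * r^i * D"
    using lower t_pos by (simp add: D_def algebra_simps)
  then show "pos_incr H0 K0 0 i \<le> t * r^i" unfolding eq using D by (simp add: divide_le_eq)
qed

lemma kappa2_nonneg: "0 \<le> kappa2"
  unfolding kappa2_def using sum_rho_pos pos_incr_H0_K0_bounds(1)
  by (intro divide_nonneg_pos sum_nonneg) auto

definition drift :: real where
  "drift = h * t * (\<Sum>i<n. r^i)"

text \<open>The increments of the second column sum to zero and are bounded above by \<open>t r\<^sup>i\<close>, so every
  partial sum is squeezed between \<open>\<plusminus> t \<Sum>\<^sub>i\<^sub><\<^sub>n r\<^sup>i\<close>.\<close>

lemma abs_pos_col2_le: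
  assumes "k \<le> n"
  shows "\<bar>pos_coeff 0 H2 K2 P2 k\<bar> \<le> drift"
proof -
  let ?m = "\<lambda>i. pos_incr H0 K0 0 i - kappa2 * rho i"
  have incr_le: "?m i \<le> t * r^i" if "i < n" for i
    using pos_incr_H0_K0_bounds(2)[OF that] mult_nonneg_nonneg[OF kappa2_nonneg less_imp_le[OF rho_pos[OF that]]]
    by linarith
  have tr: "\<And>i. 0 \<le> t * r^i" using t_pos r_pos by simp
  have head: "(\<Sum>i<k. ?m i) \<le> (\<Sum>i<n. t * r^i)"
  proof -
    have "(\<Sum>i<k. ?m i) \<le> (\<Sum>i<k. t * r^i)" using assms incr_le by (intro sum_mono) auto
    also have "\<dots> \<le> (\<Sum>i<n. t * r^i)" using assms tr by (intro sum_mono2) auto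
    finally show ?thesis .
  qed
  have tail: "(\<Sum>i\<in>{k..<n}. ?m i) \<le> (\<Sum>i<n. t * r^i)"
  proof -
    have "(\<Sum>i\<in>{k..<n}. ?m i) \<le> (\<Sum>i\<in>{k..<n}. t * r^i)" using incr_le by (intro sum_mono) auto
    also have "\<dots> \<le> (\<Sum>i<n. t * r^i)" using tr by (intro sum_mono2) auto
    finally show ?thesis .
  qed
  have total: "(\<Sum>i<k. ?m i) + (\<Sum>i\<in>{k..<n}. ?m i) = 0"
  proof -
    have "(\<Sum>i<n. ?m i) = 0"
      using sum_pos_incr_col2 by (simp add: pos_incr_col2)
    then show ?thesis
      using assms by (simp add: lessThan_atLeast0 sum.atLeastLessThan_concat)
  qed
  have "\<bar>\<Sum>i<k. ?m i\<bar> \<le> (\<Sum>i<n. t * r^i)" using head tail total by linarith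
  then have "h * \<bar>\<Sum>i<k. ?m i\<bar> \<le> h * (\<Sum>i<n. t * r^i)" using h_pos by (simp add: mult_left_mono)
  then show ?thesis
    using h_pos by (simp add: drift_def pos_coeff_def pos_incr_col2 abs_mult sum_distrib_left [symmetric] mult.assoc)
qed

lemma pos_traj_le:
  assumes "k \<le> n"
  shows "norm (pos (traj \<gamma> h n dz k))
           \<le> norm (pos dz) + drift * norm (vel (dz :: ('d::finite) phase))"
proof -
  let ?a = "pos_coeff 1 H1 H1 P1 k" and ?b = "pos_coeff 0 H2 K2 P2 k"
  have "pos (traj \<gamma> h n dz k) = ?a *\<^sub>R pos dz + ?b *\<^sub>R vel dz"
    by (simp add: traj_eq_Zmat[OF assms] Zmat_def pos_blockmat_mult_vec)
  then have "norm (pos (traj \<gamma> h n dz k)) \<le> \<bar>?a\<bar> * norm (pos dz) + \<bar>?b\<bar> * norm (vel dz)"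
    by (metis norm_scaleR norm_triangle_ineq)
  also have "\<dots> \<le> 1 * norm (pos dz) + drift * norm (vel dz)"
    using pos_col1_bounds[OF assms] abs_pos_col2_le[OF assms]
    by (intro add_mono mult_right_mono) auto
  finally show ?thesis by simp
qed

lemma drift_eq: "h * exp (-\<gamma>*h/2) / (1 - exp (-\<gamma>*h)) * (1 - exp (-\<gamma>*h*n)) = drift"
  using r_less_1 by (simp add: drift_def exp_neg_half exp_neg exp_neg_n sum_gp_strict)

lemma drift_le: "drift \<le> 2*h*n / (2 + \<gamma>*h*n)"
proof -
  have T: "0 \<le> \<gamma>*h*n" using gamma_pos h_pos by simp
  have "\<gamma>*h*t \<le> 1 - r"
    using mult_exp_neg_half_le[of "\<gamma>*h"] gamma_pos h_pos by (simp add: exp_neg_half exp_neg)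
  then have "\<gamma>*h*t * (1 - r^n) \<le> (1 - r) * (1 - r^n)"
    using rn_less_1 by (intro mult_right_mono) auto
  then have "h * t * (1 - r^n) * \<gamma> \<le> (1 - r) * (1 - r^n)"
    by (simp add: algebra_simps)
  then have "h * t * ((1 - r^n) / (1 - r)) \<le> (1 - r^n) / \<gamma>"
    using r_less_1 gamma_pos by (simp add: field_simps)
  also have "\<dots> \<le> 2*h*n / (2 + \<gamma>*h*n)"
  proof -
    have "(1 - r^n) * (2 + \<gamma>*h*n) \<le> 2 * (\<gamma>*h*n)"
      using one_minus_exp_neg_mult_le[OF T] by (simp only: exp_neg_n)
    then show ?thesis using gamma_pos T by (simp add: field_simps)
  qed
  finally show ?thesis
    using r_less_1 by (simp add: drift_def sum_gp_strict)
qed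

lemma pos_vel_drift_le:
  "norm (pos dz) + drift * norm (vel dz) \<le> 2 * (1 + h*n / (2 + \<gamma>*h*n)) * norm (dz :: ('d::finite) phase)"
proof -
  have "0 \<le> drift"
    using h_pos t_pos r_pos by (simp add: drift_def sum_nonneg)
  then have "norm (pos dz) + drift * norm (vel dz) \<le> (1 + drift) * norm dz"
    using norm_pos_le[of dz] mult_left_mono[OF norm_vel_le[of dz], of drift] by (simp add: algebra_simps)
  also have "\<dots> \<le> (1 + 2*h*n / (2 + \<gamma>*h*n)) * norm dz"
    using drift_le by (intro mult_right_mono) auto
  also have "\<dots> \<le> 2 * (1 + h*n / (2 + \<gamma>*h*n)) * norm dz"
    using gamma_pos h_pos by (intro mult_right_mono) (auto simp: field_simps)
  finally show ?thesis .
qed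

end

theorem mainTheorem9:
  fixes \<gamma> h :: real and n k :: nat and z z' :: "('d::finite) phase"
  assumes "\<gamma> > 0" and "h > 0" and "n \<ge> 1" and "k \<le> n"
  shows "norm (pos (traj \<gamma> h n (z' - z) k))
           \<le> norm (pos (z' - z)) + h * exp (-\<gamma>*h/2) / (1 - exp (-\<gamma>*h))
                 * (1 - exp (-\<gamma>*h*n)) * norm (vel (z' - z))
       \<and> norm (pos (z' - z)) + h * exp (-\<gamma>*h/2) / (1 - exp (-\<gamma>*h))
                 * (1 - exp (-\<gamma>*h*n)) * norm (vel (z' - z))
           \<le> 2 * (1 + h*n / (2 + \<gamma>*h*n)) * norm (z' - z)"
proof -
  interpret langevin_step \<gamma> h n
    using assms(1-3) by unfold_locales
  show ?thesis
    unfolding drift_eq using pos_traj_le[OF assms(4)] pos_vel_drift_le by blast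
qed

end
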